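(* Let $n \ge 1$, $1 \le k \le 2^n$ and $0 \le q \le n$. Let $S^*_{k,n} = \{\mathrm{bin}(0),\mathrm{bin}(1),\ldots,\mathrm{bin}(k-1)\} \subseteq B_n$. Then $m_q(S^*_{k,n}) = \sum_{j=0}^{k-1} h_q(j)$, and for every set $S \subseteq B_n$ with $|S| = k$ we have $m_q(S) \le m_q(S^*_{k,n})$. That is, $S^*_{k,n}$ contains the maximum possible number of $q$-dimensional subcubes among all $k$-element subsets of $B_n$.
   Context: The $n$-cube is $B_n = \{0,1\}^n$; the coordinates of $x \in B_n$ are indexed $x = (x_{n-1},\ldots,x_1,x_0)$, and $x$ represents the integer $\sum_{i=0}^{n-1} x_i 2^i$. For $i \in [0:2^n-1]$, $\mathrm{bin}(i) \in B_n$ is the $n$-bit binary representation of $i$ (with leading zeros). $h(i)$ denotes the number of ones in $\mathrm{bin}(i)$, and $h_q(i) = \binom{h(i)}{q}$. A $q$-dimensional subcube of $B_n$ is a set of the form $\{x \in B_n : x_i = b(i) \text{ for all } i \in Q\}$, where $Q \subseteq [0:n-1]$ has size $n-q$ and $b : Q \to \{0,1\}$ is arbitrary. For $S \subseteq B_n$, $m_q(S)$ denotes the number of $q$-dimensional subcubes of $B_n$ contained in $S$. *)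

theory Defs
  imports Main
begin

text \<open>The n-cube B_n: points are bit vectors x :: nat => bool with x i = False for i >= n;
  x i is the coordinate x_i.\<close>
definition cube :: "nat \<Rightarrow> (nat \<Rightarrow> bool) set" where
  "cube n = {x. \<forall>i. n \<le> i \<longrightarrow> \<not> x i}"

definition bin :: "nat \<Rightarrow> nat \<Rightarrow> (nat \<Rightarrow> bool)" where
  "bin n i = (\<lambda>j. j < n \<and> odd (i div 2 ^ j))"

definition h :: "nat \<Rightarrow> nat" where
  "h i = card {j. odd (i div 2 ^ j)}"

definition hq :: "nat \<Rightarrow> nat \<Rightarrow> nat" where
  "hq q i = h i choose q"

definition subcubes :: "nat \<Rightarrow> nat \<Rightarrow> (nat \<Rightarrow> bool) set set" where
  "subcubes n q = {C. \<exists>Q b. Q \<subseteq> {..<n} \<and> card Q = n - q \<and>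
                        C = {x \<in> cube n. \<forall>i\<in>Q. x i = b i}}"

definition m :: "nat \<Rightarrow> nat \<Rightarrow> (nat \<Rightarrow> bool) set \<Rightarrow> nat" where
  "m n q S = card {C \<in> subcubes n q. C \<subseteq> S}"

definition Sstar :: "nat \<Rightarrow> nat \<Rightarrow> (nat \<Rightarrow> bool) set" where
  "Sstar k n = bin n ` {..<k}"

end

theory Submission
  imports Defs
begin

text \<open>
  Write F_q(k) for the sum of h_q(j) over j < k (hq_sum k q). Splitting B_(n+1) along the last
  coordinate turns S into its bottom slice S0 = S \<inter> B_n and its top slice S1. A q-face of
  B_(n+1) lies in one of the two slices or is the product of a (q-1)-face of B_n with an edge, so
  m_q(S) = m_q(S0) + m_q(S1) + m_(q-1)(S0 \<inter> S1).

  For the initial segment S*_k the slices are the initial segments S*_(min k 2^n) and S*_(k-2^n),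
  and h(2^n + j) = h(j) + 1 together with Pascal's rule turns the recursion into the one
  satisfied by F. For arbitrary S, induction on n bounds m_q(S) by
  F_q(a) + F_q(b) + F_(q-1)(min a b), where a and b are the sizes of the slices, and this is at
  most F_q(a + b) by the superadditivity F_q(a) + F_q(b) + F_(q-1)(b) \<le> F_q(a + b) for b \<le> a.
\<close>

lemma all_ge_Suc_iff: "(\<forall>i\<ge>n. P i) \<longleftrightarrow> P n \<and> (\<forall>i\<ge>Suc n. P i)"
  by (auto simp: Suc_le_eq dest: le_imp_less_or_eq)

lemma inj_on_fun_upd:
  assumes "\<forall>p\<in>A. p n = c"
  shows "inj_on (\<lambda>p. p(n := v)) A"
proof (rule inj_onI)
  fix p p'
  assume "p \<in> A" "p' \<in> A" and eq: "p(n := v) = p'(n := v)"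
  show "p = p'"
  proof
    fix i
    have "p n = c" and "p' n = c"
      using assms \<open>p \<in> A\<close> \<open>p' \<in> A\<close> by blast+
    then show "p i = p' i"
      using fun_cong[OF eq, of i] by (cases "i = n") simp_all
  qed
qed

lemma card_filter_image_fun_upd:
  assumes "\<forall>p\<in>A. p n = c"
  shows "card {p \<in> (\<lambda>p. p(n := v)) ` A. P p} = card {p \<in> A. P (p(n := v))}"
proof -
  have "{p \<in> (\<lambda>p. p(n := v)) ` A. P p} = (\<lambda>p. p(n := v)) ` {p \<in> A. P (p(n := v))}"
    by blast
  moreover have "inj_on (\<lambda>p. p(n := v)) {p \<in> A. P (p(n := v))}"
    using assms by (intro inj_on_fun_upd[where c = c]) simp
  ultimately show ?thesis
    by (simp add: card_image)
qed

lemma card_option_fibers: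
  assumes "finite A"
  shows "card A = card {x \<in> A. f x = Some False} + card {x \<in> A. f x = Some True}
    + card {x \<in> A. f x = None}"
proof -
  have "A = {x \<in> A. f x = Some False} \<union> {x \<in> A. f x = Some True} \<union> {x \<in> A. f x = None}"
  proof (intro equalityI subsetI)
    fix x
    assume "x \<in> A"
    then show "x \<in> {x \<in> A. f x = Some False} \<union> {x \<in> A. f x = Some True} \<union> {x \<in> A. f x = None}"
      by (cases "f x") auto
  qed auto
  also have "card \<dots> = card ({x \<in> A. f x = Some False} \<union> {x \<in> A. f x = Some True})
      + card {x \<in> A. f x = None}"
    using assms by (intro card_Un_disjoint) auto
  also have "card ({x \<in> A. f x = Some False} \<union> {x \<in> A. f x = Some True})
      = card {x \<in> A. f x = Some False} + card {x \<in> A. f x = Some True}"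
    using assms by (intro card_Un_disjoint) auto
  finally show ?thesis .
qed

lemma lessThan_split_nat: "{..<k} = {..<min k m} \<union> (\<lambda>r. m + r) ` {..<k - m}" for k m :: nat
proof (intro equalityI subsetI)
  fix i
  assume i: "i \<in> {..<k}"
  show "i \<in> {..<min k m} \<union> (\<lambda>r. m + r) ` {..<k - m}"
  proof (cases "i < m")
    case False
    with i have "i = m + (i - m)" and "i - m \<in> {..<k - m}"
      by auto
    then show ?thesis
      by blast
  qed (use i in simp)
qed auto

section \<open>Binary digit sums\<close>

lemma finite_odd_digits: "finite {j. odd ((i::nat) div 2 ^ j)}"
proof (rule finite_subset)
  show "{j. odd (i div 2 ^ j)} \<subseteq> {..<i}"
  proof
    fix j
    assume "j \<in> {j. odd (i div 2 ^ j)}"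
    then have "2 ^ j \<le> i"
      by (metis div_less mem_Collect_eq not_le even_zero)
    then show "j \<in> {..<i}"
      using less_exp[of j] by (simp only: lessThan_iff)
  qed
qed simp

lemma odd_double_div_power:
  "odd (2 * (i::nat) div 2 ^ j) \<longleftrightarrow> (\<exists>j'. j = Suc j' \<and> odd (i div 2 ^ j'))"
  by (cases j) (simp_all add: div_mult2_eq)

lemma odd_Suc_double_div_power:
  "odd (Suc (2 * (i::nat)) div 2 ^ j) \<longleftrightarrow> j = 0 \<or> (\<exists>j'. j = Suc j' \<and> odd (i div 2 ^ j'))"
  by (cases j) (simp_all add: div_mult2_eq)

lemma h_double: "h (2 * i) = h i"
proof -
  have "{j. odd (2 * i div 2 ^ j)} = Suc ` {j. odd (i div 2 ^ j)}"
    by (auto simp: odd_double_div_power)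
  then show ?thesis
    by (simp add: h_def card_image)
qed

lemma h_Suc_double: "h (Suc (2 * i)) = Suc (h i)"
proof -
  have "{j. odd (Suc (2 * i) div 2 ^ j)} = insert 0 (Suc ` {j. odd (i div 2 ^ j)})"
    by (auto simp: odd_Suc_double_div_power)
  then show ?thesis
    by (simp add: h_def card_image finite_odd_digits)
qed

lemma odd_two_power_add_div:
  assumes "j < (2::nat) ^ n"
  shows "odd ((2 ^ n + j) div 2 ^ i) \<longleftrightarrow> i = n \<or> odd (j div 2 ^ i)"
proof (cases i n rule: linorder_cases)
  case less
  then have "(2::nat) ^ n = 2 ^ (n - i) * 2 ^ i"
    by (simp flip: power_add)
  then have "(2 ^ n + j) div 2 ^ i = j div 2 ^ i + 2 ^ (n - i)"
    by (simp only: add.commute[of "2 ^ n"] div_mult_self2 power_not_zero) simp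
  then show ?thesis
    using less by simp
next
  case equal
  with assms show ?thesis
    by (simp add: div_add_self1)
next
  case greater
  then have "(2::nat) ^ Suc n \<le> 2 ^ i"
    by (intro power_increasing) simp_all
  then have "(2 ^ n + j) div 2 ^ i = 0" and "j div 2 ^ i = 0"
    using assms by simp_all
  with greater show ?thesis
    by simp
qed

lemma h_two_power_add: "j < 2 ^ n \<Longrightarrow> h (2 ^ n + j) = Suc (h j)"
proof -
  assume j: "j < 2 ^ n"
  then have "{i. odd ((2 ^ n + j) div 2 ^ i)} = insert n {i. odd (j div 2 ^ i)}"
    by (auto simp: odd_two_power_add_div)
  moreover have "n \<notin> {i. odd (j div 2 ^ i)}"
    using j by simp
  ultimately show ?thesis
    by (simp add: h_def finite_odd_digits)
qed

section \<open>Prefix sums of h_q\<close>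

text \<open>Multiplication of the generating polynomial of G by 1 + t; by Pascal's rule it raises the
  h in q \<mapsto> h choose q by one.\<close>
definition pascal :: "(nat \<Rightarrow> nat) \<Rightarrow> nat \<Rightarrow> nat" where
  "pascal G q = G q + (case q of 0 \<Rightarrow> 0 | Suc p \<Rightarrow> G p)"

lemma le_pascal: "G q \<le> pascal G q"
  by (simp add: pascal_def)

lemma pascal_mono: "(\<And>q. G q \<le> H q) \<Longrightarrow> pascal G q \<le> pascal H q"
  by (auto simp: pascal_def split: nat.split intro: add_mono)

lemma pascal_add: "pascal (\<lambda>q. G q + H q) = (\<lambda>q. pascal G q + pascal H q)"
  by (simp add: pascal_def fun_eq_iff split: nat.split)

lemma pascal_sum: "pascal (\<lambda>q. \<Sum>j\<in>A. G j q) q = (\<Sum>j\<in>A. pascal (G j) q)"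
  by (simp add: pascal_def sum.distrib split: nat.split)

lemma hq_eq_pascal: "h a = Suc (h b) \<Longrightarrow> hq q a = pascal (\<lambda>q. hq q b) q"
  by (cases q) (simp_all add: hq_def pascal_def)

definition hq_sum :: "nat \<Rightarrow> nat \<Rightarrow> nat" where
  "hq_sum k q = (\<Sum>j<k. hq q j)"

lemma hq_sum_0 [simp]: "hq_sum 0 q = 0"
  by (simp add: hq_sum_def)

lemma hq_sum_Suc: "hq_sum (Suc k) = (\<lambda>q. hq_sum k q + hq q k)"
  by (simp add: hq_sum_def fun_eq_iff)

lemma hq_sum_mono: "k \<le> l \<Longrightarrow> hq_sum k q \<le> hq_sum l q"
  unfolding hq_sum_def by (rule sum_mono2) auto

lemma hq_sum_double: "hq_sum (2 * c) q = hq_sum c q + pascal (hq_sum c) q"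
proof (induction c arbitrary: q)
  case (Suc c)
  have "hq_sum (2 * Suc c) q = hq_sum (2 * c) q + hq q (2 * c) + hq q (Suc (2 * c))"
    by (simp add: hq_sum_Suc)
  also have "\<dots> = hq_sum c q + pascal (hq_sum c) q + hq q c + pascal (\<lambda>q. hq q c) q"
    using Suc hq_eq_pascal[OF h_Suc_double] by (simp add: hq_def h_double)
  also have "\<dots> = hq_sum (Suc c) q + pascal (hq_sum (Suc c)) q"
    by (simp add: hq_sum_Suc pascal_add)
  finally show ?case .
qed (simp add: pascal_def split: nat.split)

lemma hq_sum_Suc_double: "hq_sum (Suc (2 * c)) q = hq_sum (Suc c) q + pascal (hq_sum c) q"
  using hq_sum_double[of c q] by (simp add: hq_sum_Suc hq_def h_double)

lemma hq_sum_halves: "hq_sum k = (\<lambda>q. hq_sum ((k + 1) div 2) q + pascal (hq_sum (k div 2)) q)"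
  by (cases "even k") (auto elim!: evenE oddE simp: fun_eq_iff hq_sum_double hq_sum_Suc_double)

lemma hq_sum_two_power_add:
  assumes "k \<le> 2 ^ n"
  shows "hq_sum (2 ^ n + k) q = hq_sum (2 ^ n) q + pascal (hq_sum k) q"
proof -
  have "hq_sum (2 ^ n + k) q = hq_sum (2 ^ n) q + (\<Sum>j<k. hq q (2 ^ n + j))"
    by (induction k) (simp_all add: hq_sum_def)
  also have "(\<Sum>j<k. hq q (2 ^ n + j)) = (\<Sum>j<k. pascal (\<lambda>q. hq q j) q)"
    using assms by (intro sum.cong refl hq_eq_pascal h_two_power_add) simp
  also have "\<dots> = pascal (hq_sum k) q"
    unfolding hq_sum_def[abs_def] by (rule pascal_sum[symmetric])
  finally show ?thesis .
qed

text \<open>Both sides are expanded by hq_sum_halves and the halves are paired up. For a = 2c + 1 and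
  b = 2d + 1 the natural pairing fails; c + 1 is paired with d instead, and le_pascal absorbs the
  difference.\<close>
lemma hq_sum_superadditive:
  "b \<le> a \<Longrightarrow> hq_sum a q + pascal (hq_sum b) q \<le> hq_sum (a + b) q"
proof (induction "a + b" arbitrary: a b q rule: less_induct)
  case less
  consider "b = 0" | "odd a" "odd b" "a = b" | "odd a" "odd b" "b < a" | "b \<noteq> 0" "even a \<or> even b"
    using less.prems by linarith
  then show ?case
  proof cases
    case 1
    then show ?thesis
      by (simp add: pascal_def split: nat.split)
  next
    case 2
    then show ?thesis
      using hq_sum_double[of a q] by (simp flip: mult_2)
  next
    case 3
    then obtain c d where a: "a = Suc (2 * c)" and b: "b = Suc (2 * d)" and "d < c"
      by (auto elim!: oddE)
    have IH1: "hq_sum (Suc c) q + pascal (hq_sum d) q \<le> hq_sum (Suc (c + d)) q"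
      using less.hyps[of "Suc c" d] a b \<open>d < c\<close> by simp
    have "pascal (\<lambda>r. hq_sum c r + pascal (hq_sum (Suc d)) r) q
        \<le> pascal (hq_sum (Suc (c + d))) q"
      using less.hyps[of c "Suc d"] a b \<open>d < c\<close> by (intro pascal_mono) simp
    then have IH2: "pascal (hq_sum c) q + pascal (pascal (hq_sum (Suc d))) q
        \<le> pascal (hq_sum (Suc (c + d))) q"
      by (simp add: pascal_add)
    have "pascal (hq_sum (Suc d)) q + pascal (pascal (hq_sum d)) q
        \<le> pascal (hq_sum d) q + pascal (pascal (hq_sum (Suc d))) q"
      using le_pascal[of "pascal (\<lambda>q. hq q d)" q] by (simp add: hq_sum_Suc pascal_add)
    moreover have "hq_sum (a + b) q = hq_sum (Suc (c + d)) q + pascal (hq_sum (Suc (c + d))) q"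
      using a b hq_sum_double[of "Suc (c + d)" q] by (simp add: algebra_simps)
    ultimately show ?thesis
      using IH1 IH2 unfolding a b hq_sum_Suc_double pascal_add by simp
  next
    case 4
    define a1 a0 b1 b0 where "a1 = (a + 1) div 2" "a0 = a div 2" "b1 = (b + 1) div 2" "b0 = b div 2"
    have halves: "(a + b + 1) div 2 = a1 + b1" "(a + b) div 2 = a0 + b0"
      using 4 unfolding a1_a0_b1_b0_def by (auto elim!: evenE)
    have IH1: "hq_sum a1 q + pascal (hq_sum b1) q \<le> hq_sum (a1 + b1) q"
      using less 4 unfolding a1_a0_b1_b0_def by (intro less.hyps) auto
    have "pascal (\<lambda>r. hq_sum a0 r + pascal (hq_sum b0) r) q \<le> pascal (hq_sum (a0 + b0)) q"
      using less 4 unfolding a1_a0_b1_b0_def by (intro pascal_mono less.hyps) auto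
    then have IH2: "pascal (hq_sum a0) q + pascal (pascal (hq_sum b0)) q \<le> pascal (hq_sum (a0 + b0)) q"
      by (simp add: pascal_add)
    have "hq_sum a q = hq_sum a1 q + pascal (hq_sum a0) q"
      unfolding a1_a0_b1_b0_def by (subst hq_sum_halves) simp
    moreover have "pascal (hq_sum b) q = pascal (hq_sum b1) q + pascal (pascal (hq_sum b0)) q"
      unfolding a1_a0_b1_b0_def hq_sum_halves[of b] pascal_add by simp
    moreover have "hq_sum (a + b) q = hq_sum (a1 + b1) q + pascal (hq_sum (a0 + b0)) q"
      unfolding halves[symmetric] by (subst hq_sum_halves) simp
    ultimately show ?thesis
      using IH1 IH2 by linarith
  qed
qed

lemma hq_sum_add_ge:
  "hq_sum a q + hq_sum b q + (case q of 0 \<Rightarrow> 0 | Suc r \<Rightarrow> hq_sum (min a b) r) \<le> hq_sum (a + b) q"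
proof (cases "b \<le> a")
  case True
  then show ?thesis
    using hq_sum_superadditive[OF True, of q] by (cases q) (simp_all add: pascal_def)
next
  case False
  then show ?thesis
    using hq_sum_superadditive[of a b q] by (cases q) (simp_all add: pascal_def add.commute)
qed

section \<open>Slicing the cube along the last coordinate\<close>

lemma cube_eq_image_Pow: "cube n = (\<lambda>A i. i \<in> A) ` Pow {..<n}"
proof
  show "cube n \<subseteq> (\<lambda>A i. i \<in> A) ` Pow {..<n}"
  proof
    fix x
    assume "x \<in> cube n"
    then have "{i. x i} \<in> Pow {..<n}"
      by (auto simp: cube_def not_less[symmetric])
    then show "x \<in> (\<lambda>A i. i \<in> A) ` Pow {..<n}"
      by (rule rev_image_eqI) simp
  qed
qed (auto simp: cube_def)

lemma finite_cube: "finite (cube n)"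
  by (simp add: cube_eq_image_Pow)

lemma mem_cube_iff_Suc: "x \<in> cube n \<longleftrightarrow> x \<in> cube (Suc n) \<and> \<not> x n"
  by (auto simp: cube_def all_ge_Suc_iff[of n])

lemma fun_upd_True_notin_cube: "y(n := True) \<notin> cube n"
proof
  assume "y(n := True) \<in> cube n"
  then have "\<not> (y(n := True)) n"
    unfolding cube_def by blast
  then show False
    by simp
qed

lemma inj_on_fun_upd_cube: "inj_on (\<lambda>y. y(n := True)) (cube n)"
  by (rule inj_on_fun_upd[where c = False]) (simp add: cube_def)

definition top_slice :: "nat \<Rightarrow> (nat \<Rightarrow> bool) set \<Rightarrow> (nat \<Rightarrow> bool) set" where
  "top_slice n S = {y \<in> cube n. y(n := True) \<in> S}"

lemma image_fun_upd_subset_iff: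
  "A \<subseteq> cube n \<Longrightarrow> (\<lambda>x. x(n := True)) ` A \<subseteq> S \<longleftrightarrow> A \<subseteq> top_slice n S"
  by (auto simp: top_slice_def)

lemma lower_slice_Un_image:
  "A \<subseteq> cube n \<Longrightarrow> (A \<union> (\<lambda>y. y(n := True)) ` B) \<inter> cube n = A"
  using fun_upd_True_notin_cube by blast

lemma top_slice_Un_image:
  assumes "A \<subseteq> cube n" and "B \<subseteq> cube n"
  shows "top_slice n (A \<union> (\<lambda>y. y(n := True)) ` B) = B"
proof (intro equalityI subsetI)
  fix y
  assume y: "y \<in> top_slice n (A \<union> (\<lambda>y. y(n := True)) ` B)"
  then have "y \<in> cube n" and "y(n := True) \<in> (\<lambda>y. y(n := True)) ` B"
    using assms(1) fun_upd_True_notin_cube by (auto simp: top_slice_def)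
  then show "y \<in> B"
    using assms(2) inj_on_fun_upd_cube by (auto dest: inj_onD)
qed (use assms(2) in \<open>auto simp: top_slice_def\<close>)

lemma subset_cube_Suc_decomp:
  assumes "S \<subseteq> cube (Suc n)"
  shows "S = (S \<inter> cube n) \<union> (\<lambda>y. y(n := True)) ` top_slice n S"
proof (intro equalityI subsetI)
  fix x
  assume x: "x \<in> S"
  show "x \<in> (S \<inter> cube n) \<union> (\<lambda>y. y(n := True)) ` top_slice n S"
  proof (cases "x n")
    case True
    have eq: "x = (x(n := False))(n := True)"
      using True by (simp add: fun_eq_iff)
    have "x(n := False) \<in> cube n"
      using x assms by (auto simp: cube_def)
    with x eq have "x(n := False) \<in> top_slice n S"
      by (simp add: top_slice_def)
    with eq have "x \<in> (\<lambda>y. y(n := True)) ` top_slice n S"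
      by (rule image_eqI)
    then show ?thesis
      by (rule UnI2)
  next
    case False
    then have "x \<in> cube n"
      using x assms by (auto simp: mem_cube_iff_Suc[of x n])
    with x show ?thesis
      by blast
  qed
qed (auto simp: top_slice_def)

lemma card_Un_image_fun_upd:
  assumes "A \<subseteq> cube n" and "B \<subseteq> cube n"
  shows "card (A \<union> (\<lambda>y. y(n := True)) ` B) = card A + card B"
proof -
  have "finite A" "finite B"
    using assms finite_cube finite_subset by blast+
  moreover have "A \<inter> (\<lambda>y. y(n := True)) ` B = {}"
    using assms(1) fun_upd_True_notin_cube by blast
  moreover have "card ((\<lambda>y. y(n := True)) ` B) = card B"
    using assms(2) by (intro card_image inj_on_subset[OF inj_on_fun_upd_cube])
  ultimately show ?thesis
    by (simp add: card_Un_disjoint)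
qed

lemma card_subset_cube_Suc:
  assumes "S \<subseteq> cube (Suc n)"
  shows "card S = card (S \<inter> cube n) + card (top_slice n S)"
  using card_Un_image_fun_upd[of "S \<inter> cube n" n "top_slice n S"] subset_cube_Suc_decomp[OF assms]
  by (simp add: top_slice_def)

section \<open>Faces\<close>

text \<open>A face is encoded by a pattern p: p i = None marks a free coordinate and p i = Some b a
  coordinate fixed to b. Fixing all coordinates from n on to False makes the patterns in
  face_codes n q correspond bijectively to the q-dimensional subcubes of B_n.\<close>
definition face :: "(nat \<Rightarrow> bool option) \<Rightarrow> (nat \<Rightarrow> bool) set" where
  "face p = {x. \<forall>i b. p i = Some b \<longrightarrow> x i = b}"

definition free :: "(nat \<Rightarrow> bool option) \<Rightarrow> nat set" where
  "free p = {i. p i = None}"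

definition face_codes :: "nat \<Rightarrow> nat \<Rightarrow> (nat \<Rightarrow> bool option) set" where
  "face_codes n q = {p. (\<forall>i\<ge>n. p i = Some False) \<and> card (free p) = q}"

definition face_count :: "nat \<Rightarrow> nat \<Rightarrow> (nat \<Rightarrow> bool) set \<Rightarrow> nat" where
  "face_count n q S = card {p \<in> face_codes n q. face p \<subseteq> S}"

lemma face_codes_free_subset: "p \<in> face_codes n q \<Longrightarrow> free p \<subseteq> {..<n}"
  by (auto simp: face_codes_def free_def not_less[symmetric])

lemma finite_free: "p \<in> face_codes n q \<Longrightarrow> finite (free p)"
  by (meson face_codes_free_subset finite_lessThan finite_subset)

lemma face_codes_at_n: "\<forall>p\<in>face_codes n q. p n = Some False"
  by (simp add: face_codes_def)

lemma face_subset_cube: "p \<in> face_codes n q \<Longrightarrow> face p \<subseteq> cube n"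
  by (auto simp: face_def face_codes_def cube_def)

lemma base_point_in_face: "(\<lambda>i. p i = Some True) \<in> face p"
  by (auto simp: face_def)

lemma face_subset_fixed:
  assumes "face p \<subseteq> face p'" and "p' i = Some b"
  shows "p i = Some b"
proof (rule ccontr)
  assume not_fixed: "p i \<noteq> Some b"
  define x where "x = (\<lambda>j. if j = i then \<not> b else p j = Some True)"
  have "x j = c" if "p j = Some c" for j c
  proof (cases "j = i")
    case True
    with not_fixed that have "c = (\<not> b)"
      by auto
    with True show ?thesis
      by (simp add: x_def)
  qed (simp add: x_def that)
  then have "x \<in> face p"
    by (simp add: face_def)
  then have "x i = b"
    using assms unfolding face_def by blast
  then show False
    by (simp add: x_def)
qed

lemma inj_face: "inj face"
proof (rule injI)
  fix p p'
  assume eq: "face p = face p'"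
  show "p = p'"
  proof
    fix i
    show "p i = p' i"
      using face_subset_fixed[of p p' i] face_subset_fixed[of p' p i] eq
      by (cases "p i"; cases "p' i") auto
  qed
qed

lemma finite_face_codes: "finite (face_codes n q)"
proof (rule finite_imageD)
  show "finite (face ` face_codes n q)"
    using face_subset_cube finite_cube by (blast intro: finite_subset[of _ "Pow (cube n)"])
  show "inj_on face (face_codes n q)"
    using inj_face by (rule inj_on_subset) simp
qed

lemma face_eq_subcube:
  assumes "p \<in> face_codes n q"
  shows "face p = {x \<in> cube n. \<forall>i\<in>{..<n} - free p. x i = (p i = Some True)}"
proof -
  have outside: "p i = Some False" if "n \<le> i" for i
    using assms that by (simp add: face_codes_def)
  show ?thesis
  proof (intro set_eqI iffI)
    fix x
    assume "x \<in> face p"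
    then have fixed: "x i = c" if "p i = Some c" for i c
      using that by (simp add: face_def)
    then have "x \<in> cube n"
      using outside by (auto simp: cube_def)
    moreover have "x i = (p i = Some True)" if "p i \<noteq> None" for i
      using that fixed by (cases "p i") auto
    ultimately show "x \<in> {x \<in> cube n. \<forall>i\<in>{..<n} - free p. x i = (p i = Some True)}"
      by (simp add: free_def)
  next
    fix x
    assume x: "x \<in> {x \<in> cube n. \<forall>i\<in>{..<n} - free p. x i = (p i = Some True)}"
    have "x i = c" if "p i = Some c" for i c
    proof (cases "i < n")
      case True
      with x that show ?thesis
        by (auto simp: free_def)
    next
      case False
      with x outside that show ?thesis
        by (auto simp: cube_def)
    qed
    then show "x \<in> face p"
      by (simp add: face_def)
  qed
qed

lemma subcube_eq_face:
  assumes "Q \<subseteq> {..<n}"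
  shows "{x \<in> cube n. \<forall>i\<in>Q. x i = b i}
    = face (\<lambda>i. if i < n \<and> i \<notin> Q then None else Some (i < n \<and> b i))"
  using assms unfolding face_def cube_def by (auto simp: not_le)

lemma subcubes_eq_image_face:
  assumes "q \<le> n"
  shows "subcubes n q = face ` face_codes n q"
proof
  show "subcubes n q \<subseteq> face ` face_codes n q"
  proof
    fix C
    assume "C \<in> subcubes n q"
    then obtain Q b where Q: "Q \<subseteq> {..<n}" "card Q = n - q"
      and C: "C = {x \<in> cube n. \<forall>i\<in>Q. x i = b i}"
      unfolding subcubes_def by blast
    define p where "p = (\<lambda>i. if i < n \<and> i \<notin> Q then None else Some (i < n \<and> b i))"
    have "free p = {..<n} - Q"
      by (auto simp: p_def free_def)
    then have "card (free p) = q"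
      using Q assms by (simp add: card_Diff_subset finite_subset)
    then have "p \<in> face_codes n q"
      by (simp add: face_codes_def p_def)
    moreover have "C = face p"
      unfolding C p_def using Q(1) by (rule subcube_eq_face)
    ultimately show "C \<in> face ` face_codes n q"
      by blast
  qed
next
  show "face ` face_codes n q \<subseteq> subcubes n q"
  proof
    fix C
    assume "C \<in> face ` face_codes n q"
    then obtain p where p: "p \<in> face_codes n q" and C: "C = face p"
      by blast
    have "free p \<subseteq> {..<n}" "card (free p) = q"
      using p face_codes_free_subset by (auto simp: face_codes_def)
    then have "card ({..<n} - free p) = n - q"
      by (simp add: card_Diff_subset finite_subset)
    then show "C \<in> subcubes n q"
      unfolding subcubes_def C face_eq_subcube[OF p]
      by (intro CollectI exI[of _ "{..<n} - free p"] exI[of _ "\<lambda>i. p i = Some True"]) auto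
  qed
qed

lemma m_eq_face_count:
  assumes "q \<le> n"
  shows "m n q S = face_count n q S"
proof -
  have "{C \<in> subcubes n q. C \<subseteq> S} = face ` {p \<in> face_codes n q. face p \<subseteq> S}"
    unfolding subcubes_eq_image_face[OF assms] by blast
  moreover have "inj_on face {p \<in> face_codes n q. face p \<subseteq> S}"
    using inj_face by (rule inj_on_subset) simp
  ultimately show ?thesis
    unfolding m_def face_count_def by (simp add: card_image)
qed

lemma face_count_empty: "face_count n q {} = 0"
proof -
  have "{p \<in> face_codes n q. face p \<subseteq> {}} = {}"
    using base_point_in_face by blast
  then show ?thesis
    unfolding face_count_def by (metis card.empty)
qed

section \<open>The recursion for face counts\<close>

lemma face_codes_lower: "{p \<in> face_codes (Suc n) q. p n = Some False} = face_codes n q"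
  by (auto simp: face_codes_def all_ge_Suc_iff[of n])

lemma free_fun_upd_Some: "p n \<noteq> None \<Longrightarrow> free (p(n := Some b)) = free p"
  by (auto simp: free_def)

lemma free_fun_upd_None: "free (p(n := None)) = insert n (free p)"
  by (auto simp: free_def)

lemma face_codes_top:
  "{p \<in> face_codes (Suc n) q. p n = Some True} = (\<lambda>p. p(n := Some True)) ` face_codes n q"
proof (intro equalityI subsetI)
  fix p
  assume p: "p \<in> {p \<in> face_codes (Suc n) q. p n = Some True}"
  then have "p(n := Some False) \<in> face_codes n q"
    by (simp add: face_codes_def free_fun_upd_Some all_ge_Suc_iff[of n])
  moreover have "p = (p(n := Some False))(n := Some True)"
    using p by auto
  ultimately show "p \<in> (\<lambda>p. p(n := Some True)) ` face_codes n q"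
    by blast
next
  fix p
  assume "p \<in> (\<lambda>p. p(n := Some True)) ` face_codes n q"
  then obtain p' where p': "p' \<in> face_codes n q" and p: "p = p'(n := Some True)"
    by blast
  then have "p' n = Some False"
    by (simp add: face_codes_def)
  with p' show "p \<in> {p \<in> face_codes (Suc n) q. p n = Some True}"
    unfolding p by (simp add: face_codes_def free_fun_upd_Some all_ge_Suc_iff[of n])
qed

lemma face_codes_free:
  "{p \<in> face_codes (Suc n) (Suc q). p n = None} = (\<lambda>p. p(n := None)) ` face_codes n q"
proof (intro equalityI subsetI)
  fix p
  assume p: "p \<in> {p \<in> face_codes (Suc n) (Suc q). p n = None}"
  define p' where "p' = p(n := Some False)"
  have p'_outside: "\<forall>i\<ge>n. p' i = Some False"
    using p by (simp add: p'_def face_codes_def all_ge_Suc_iff[of n])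
  have p_eq: "p = p'(n := None)"
    using p by (simp add: p'_def fun_eq_iff)
  have "finite (free p')"
    using p'_outside by (intro finite_free[of p' n "card (free p')"]) (simp add: face_codes_def)
  moreover have "n \<notin> free p'"
    by (simp add: free_def p'_def)
  moreover have "free p = insert n (free p')"
    by (subst p_eq) (rule free_fun_upd_None)
  ultimately have "card (free p) = Suc (card (free p'))"
    by simp
  with p p'_outside have "p' \<in> face_codes n q"
    by (simp add: face_codes_def)
  with p_eq show "p \<in> (\<lambda>p. p(n := None)) ` face_codes n q"
    by blast
next
  fix p
  assume "p \<in> (\<lambda>p. p(n := None)) ` face_codes n q"
  then obtain p' where p': "p' \<in> face_codes n q" and p: "p = p'(n := None)"
    by blast
  have "n \<notin> free p'"
    using p' by (simp add: face_codes_def free_def)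
  moreover have "finite (free p')"
    using p' by (rule finite_free)
  ultimately show "p \<in> {p \<in> face_codes (Suc n) (Suc q). p n = None}"
    using p' unfolding p by (simp add: face_codes_def free_fun_upd_None all_ge_Suc_iff[of n])
qed

lemma face_codes_free_0: "{p \<in> face_codes (Suc n) 0. p n = None} = {}"
proof -
  have "p n \<noteq> None" if p: "p \<in> face_codes (Suc n) 0" for p
  proof
    assume "p n = None"
    then have "n \<in> free p"
      by (simp add: free_def)
    moreover have "finite (free p)"
      using p by (rule finite_free)
    moreover have "card (free p) = 0"
      using p by (simp add: face_codes_def)
    ultimately show False
      by auto
  qed
  then show ?thesis
    by blast
qed

lemma fun_upd_False_in_face:
  assumes "x \<in> face (p(n := v))" and "p n = Some False"
  shows "x(n := False) \<in> face p"
proof -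
  have "x i = b" if "i \<noteq> n" "p i = Some b" for i b
    using assms(1) that by (simp add: face_def)
  with assms(2) show ?thesis
    by (auto simp: face_def)
qed

lemma fun_upd_True_in_face:
  assumes "x \<in> face p" and "v \<noteq> Some False"
  shows "x(n := True) \<in> face (p(n := v))"
proof -
  have "(x(n := True)) i = b" if "(p(n := v)) i = Some b" for i b
  proof (cases "i = n")
    case True
    with that assms(2) show ?thesis
      by (cases b) simp_all
  next
    case False
    with that assms(1) show ?thesis
      by (simp add: face_def)
  qed
  then show ?thesis
    by (simp add: face_def)
qed

lemma face_fun_upd_True:
  assumes "p n = Some False"
  shows "face (p(n := Some True)) = (\<lambda>x. x(n := True)) ` face p"
proof (intro equalityI subsetI)
  fix x
  assume x: "x \<in> face (p(n := Some True))"
  then have "x n"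
    by (simp add: face_def)
  then have "x = (x(n := False))(n := True)"
    by (simp add: fun_eq_iff)
  moreover have "x(n := False) \<in> face p"
    using x assms by (rule fun_upd_False_in_face)
  ultimately show "x \<in> (\<lambda>x. x(n := True)) ` face p"
    by blast
next
  fix x
  assume "x \<in> (\<lambda>x. x(n := True)) ` face p"
  then obtain y where "y \<in> face p" and "x = y(n := True)"
    by blast
  then show "x \<in> face (p(n := Some True))"
    by (simp add: fun_upd_True_in_face)
qed

lemma face_fun_upd_None:
  assumes "p n = Some False"
  shows "face (p(n := None)) = face p \<union> (\<lambda>x. x(n := True)) ` face p"
proof (intro equalityI subsetI)
  fix x
  assume x: "x \<in> face (p(n := None))"
  then have lower: "x(n := False) \<in> face p"
    using assms by (rule fun_upd_False_in_face)
  show "x \<in> face p \<union> (\<lambda>x. x(n := True)) ` face p"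
  proof (cases "x n")
    case True
    then have "x = (x(n := False))(n := True)"
      by (simp add: fun_eq_iff)
    with lower show ?thesis
      by blast
  next
    case False
    then have "x(n := False) = x"
      by (simp add: fun_eq_iff)
    with lower show ?thesis
      by (metis UnI1)
  qed
next
  fix x
  assume "x \<in> face p \<union> (\<lambda>x. x(n := True)) ` face p"
  then consider "x \<in> face p" | y where "y \<in> face p" and "x = y(n := True)"
    by blast
  then show "x \<in> face (p(n := None))"
  proof cases
    case 1
    then show ?thesis
      by (simp add: face_def)
  next
    case 2
    then show ?thesis
      by (simp add: fun_upd_True_in_face)
  qed
qed

lemma face_fun_upd_True_subset_iff:
  "p \<in> face_codes n q \<Longrightarrow> face (p(n := Some True)) \<subseteq> S \<longleftrightarrow> face p \<subseteq> top_slice n S"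
  by (simp add: face_fun_upd_True face_codes_def image_fun_upd_subset_iff face_subset_cube)

lemma face_fun_upd_None_subset_iff:
  "p \<in> face_codes n q \<Longrightarrow> face (p(n := None)) \<subseteq> S \<longleftrightarrow> face p \<subseteq> S \<inter> cube n \<inter> top_slice n S"
  by (simp add: face_fun_upd_None face_codes_def image_fun_upd_subset_iff face_subset_cube)

text \<open>A face of B_(n+1) with p n = Some False lies in B_n, one with p n = Some True is the lift of
  a face of B_n, and one with p n = None is the union of a face of B_n and its lift.\<close>
lemma face_count_Suc:
  "face_count (Suc n) q S = face_count n q (S \<inter> cube n) + face_count n q (top_slice n S)
    + (case q of 0 \<Rightarrow> 0 | Suc r \<Rightarrow> face_count n r (S \<inter> cube n \<inter> top_slice n S))"
proof -
  let ?fiber = "\<lambda>v. {p \<in> {p \<in> face_codes (Suc n) q. p n = v}. face p \<subseteq> S}"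
  have "face_count (Suc n) q S = card (?fiber (Some False)) + card (?fiber (Some True)) + card (?fiber None)"
    unfolding face_count_def
    by (subst card_option_fibers[where f = "\<lambda>p. p n"]) (simp_all add: finite_face_codes conj_ac)
  moreover have "card (?fiber (Some False)) = face_count n q (S \<inter> cube n)"
    unfolding face_codes_lower face_count_def
    by (simp add: face_subset_cube cong: conj_cong)
  moreover have "card (?fiber (Some True)) = face_count n q (top_slice n S)"
    unfolding face_codes_top face_count_def card_filter_image_fun_upd[OF face_codes_at_n]
    by (simp add: face_fun_upd_True_subset_iff cong: conj_cong)
  moreover have "card (?fiber None) = (case q of 0 \<Rightarrow> 0 | Suc r \<Rightarrow> face_count n r (S \<inter> cube n \<inter> top_slice n S))"
  proof (cases q)
    case (Suc r)
    show ?thesis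
      unfolding Suc face_codes_free face_count_def card_filter_image_fun_upd[OF face_codes_at_n]
      by (simp add: face_fun_upd_None_subset_iff cong: conj_cong)
  qed (simp add: face_codes_free_0)
  ultimately show ?thesis
    by simp
qed

lemma face_count_cube_0:
  assumes "S \<subseteq> cube 0"
  shows "face_count 0 q S = hq_sum (card S) q"
proof -
  have cube_0: "cube 0 = {\<lambda>_. False}"
    by (auto simp: cube_def fun_eq_iff)
  have "p \<in> face_codes 0 q \<longleftrightarrow> p = (\<lambda>_. Some False) \<and> q = 0" for p
    by (auto simp: face_codes_def free_def fun_eq_iff)
  then have codes: "face_codes 0 q = (if q = 0 then {\<lambda>_. Some False} else {})"
    by auto
  have face_0: "face (\<lambda>_. Some False) = cube 0"
    unfolding cube_0 by (auto simp: face_def fun_eq_iff)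
  have "h 0 = 0"
    by (simp add: h_def)
  from assms consider "S = {}" | "S = cube 0"
    unfolding cube_0 by blast
  then show ?thesis
  proof cases
    case 1
    then show ?thesis
      by (simp add: face_count_empty)
  next
    case 2
    then have "{p \<in> face_codes 0 q. face p \<subseteq> S} = face_codes 0 q"
      using face_0 codes by auto
    moreover have "card S = 1"
      using 2 cube_0 by simp
    ultimately show ?thesis
      by (simp add: face_count_def codes hq_sum_def hq_def \<open>h 0 = 0\<close>)
  qed
qed

section \<open>Initial segments\<close>

lemma bin_in_cube: "bin n i \<in> cube n"
  by (simp add: bin_def cube_def)

lemma bin_Suc_low:
  assumes "i < 2 ^ n"
  shows "bin (Suc n) i = bin n i"
proof
  fix j
  show "bin (Suc n) i j = bin n i j"
  proof (cases "j = n")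
    case True
    with assms show ?thesis
      by (simp add: bin_def)
  next
    case False
    then show ?thesis
      by (simp add: bin_def less_Suc_eq)
  qed
qed

lemma bin_Suc_high:
  assumes "r < 2 ^ n"
  shows "bin (Suc n) (2 ^ n + r) = (bin n r)(n := True)"
proof
  fix j
  show "bin (Suc n) (2 ^ n + r) j = ((bin n r)(n := True)) j"
    using odd_two_power_add_div[OF assms, of j] by (auto simp: bin_def less_Suc_eq)
qed

lemma Sstar_Suc:
  assumes "k \<le> 2 ^ Suc n"
  shows "Sstar k (Suc n) = Sstar (min k (2 ^ n)) n \<union> (\<lambda>y. y(n := True)) ` Sstar (k - 2 ^ n) n"
proof -
  have "Sstar k (Suc n)
      = bin (Suc n) ` {..<min k (2 ^ n)} \<union> bin (Suc n) ` (\<lambda>r. 2 ^ n + r) ` {..<k - 2 ^ n}"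
    unfolding Sstar_def lessThan_split_nat[of k "2 ^ n"] by (rule image_Un)
  also have "bin (Suc n) ` {..<min k (2 ^ n)} = Sstar (min k (2 ^ n)) n"
    unfolding Sstar_def by (rule image_cong) (simp_all add: bin_Suc_low)
  also have "bin (Suc n) ` (\<lambda>r. 2 ^ n + r) ` {..<k - 2 ^ n} = (\<lambda>y. y(n := True)) ` Sstar (k - 2 ^ n) n"
    unfolding Sstar_def image_image using assms by (intro image_cong) (simp_all add: bin_Suc_high)
  finally show ?thesis .
qed

lemma Sstar_mono: "k \<le> l \<Longrightarrow> Sstar k n \<subseteq> Sstar l n"
  unfolding Sstar_def by auto

lemma Sstar_subset_cube: "Sstar k n \<subseteq> cube n"
  unfolding Sstar_def using bin_in_cube by blast

lemma face_count_le_hq_sum: "S \<subseteq> cube n \<Longrightarrow> face_count n q S \<le> hq_sum (card S) q"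
proof (induction n arbitrary: S q)
  case 0
  then show ?case
    by (simp add: face_count_cube_0)
next
  case (Suc n)
  define S0 S1 where "S0 = S \<inter> cube n" and "S1 = top_slice n S"
  have sub: "S0 \<subseteq> cube n" "S1 \<subseteq> cube n"
    by (auto simp: S0_def S1_def top_slice_def)
  have card_S: "card S = card S0 + card S1"
    unfolding S0_def S1_def using Suc.prems by (rule card_subset_cube_Suc)
  have "(case q of 0 \<Rightarrow> 0 | Suc r \<Rightarrow> face_count n r (S0 \<inter> S1))
      \<le> (case q of 0 \<Rightarrow> 0 | Suc r \<Rightarrow> hq_sum (min (card S0) (card S1)) r)"
  proof (cases q)
    case (Suc r)
    have "face_count n r (S0 \<inter> S1) \<le> hq_sum (card (S0 \<inter> S1)) r"
      using sub by (intro Suc.IH) blast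
    also have "\<dots> \<le> hq_sum (min (card S0) (card S1)) r"
      using sub finite_cube by (intro hq_sum_mono) (simp add: card_mono finite_subset)
    finally show ?thesis
      using Suc by simp
  qed simp
  then have "face_count (Suc n) q S
      \<le> hq_sum (card S0) q + hq_sum (card S1) q
        + (case q of 0 \<Rightarrow> 0 | Suc r \<Rightarrow> hq_sum (min (card S0) (card S1)) r)"
    using Suc.IH[OF sub(1), of q] Suc.IH[OF sub(2), of q]
    unfolding face_count_Suc S0_def[symmetric] S1_def[symmetric] by linarith
  also have "\<dots> \<le> hq_sum (card S) q"
    unfolding card_S by (rule hq_sum_add_ge)
  finally show ?case .
qed

lemma face_count_Sstar: "k \<le> 2 ^ n \<Longrightarrow> face_count n q (Sstar k n) = hq_sum k q"
proof (induction n arbitrary: k q)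
  case 0
  then have "k = 0 \<or> k = 1"
    by auto
  then have "card (Sstar k 0) = k"
    by (elim disjE) (simp_all add: Sstar_def lessThan_Suc)
  then show ?case
    using Sstar_subset_cube face_count_cube_0 by metis
next
  case (Suc n)
  define A B where "A = Sstar (min k (2 ^ n)) n" and "B = Sstar (k - 2 ^ n) n"
  have decomp: "Sstar k (Suc n) = A \<union> (\<lambda>y. y(n := True)) ` B"
    unfolding A_def B_def using Suc.prems by (rule Sstar_Suc)
  have slices: "Sstar k (Suc n) \<inter> cube n = A" "top_slice n (Sstar k (Suc n)) = B"
    unfolding decomp A_def B_def using Sstar_subset_cube
    by (simp_all add: lower_slice_Un_image top_slice_Un_image)
  show ?case
  proof (cases "k \<le> 2 ^ n")
    case True
    then have "A = Sstar k n" and "B = {}"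
      by (simp_all add: A_def B_def Sstar_def)
    with True show ?thesis
      unfolding face_count_Suc slices by (simp add: Suc.IH face_count_empty split: nat.split)
  next
    case False
    define k' where "k' = k - 2 ^ n"
    have k': "k' \<le> 2 ^ n" "k = 2 ^ n + k'"
      using False Suc.prems by (simp_all add: k'_def)
    have "A = Sstar (2 ^ n) n" and "B = Sstar k' n" and "A \<inter> B = B"
      using False Sstar_mono[OF k'(1)] by (auto simp: A_def B_def k'_def)
    then have "face_count (Suc n) q (Sstar k (Suc n)) = hq_sum (2 ^ n) q + pascal (hq_sum k') q"
      unfolding face_count_Suc slices using k'(1) by (simp add: Suc.IH pascal_def split: nat.split)
    also have "\<dots> = hq_sum k q"
      unfolding k'(2) using k'(1) by (rule hq_sum_two_power_add[symmetric])
    finally show ?thesis .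
  qed
qed

theorem theorem1:
  fixes n k q :: nat
  assumes "1 \<le> n" and "1 \<le> k" and "k \<le> 2 ^ n" and "q \<le> n"
  shows "m n q (Sstar k n) = (\<Sum>j<k. hq q j)
         \<and> (\<forall>S. S \<subseteq> cube n \<and> card S = k \<longrightarrow> m n q S \<le> m n q (Sstar k n))"
proof -
  have extremal: "m n q (Sstar k n) = hq_sum k q"
    using m_eq_face_count[OF assms(4)] face_count_Sstar[OF assms(3)] by simp
  have "m n q S \<le> m n q (Sstar k n)" if "S \<subseteq> cube n" and "card S = k" for S
    using m_eq_face_count[OF assms(4)] face_count_le_hq_sum[OF that(1)] that(2) extremal by simp
  then show ?thesis
    using extremal by (simp add: hq_sum_def)
qed

end
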